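(* Let $n\ge 2$, $q\ge 2$ be integers and let $S\subseteq\bigcup_{i=2}^n\mathbb{Z}_q^i$ be a $q$-ary (variable-length) non-overlapping code with all codeword lengths at most $n$. Let $C(n,q)$ denote the maximum size of a fixed-length $q$-ary non-overlapping code $S'\subseteq\mathbb{Z}_q^n$. Then $|S|\le C(n,q)$.
   Context: $\mathbb{Z}_q=\{0,1,\dots,q-1\}$; words are finite strings over $\mathbb{Z}_q$, $|\mathbf{s}|$ denotes the length of $\mathbf{s}$. For $\mathbf{s}=(s_1,\dots,s_m)$, $\mathrm{pre}(\mathbf{s})=\{(s_1,\dots,s_k):1\le k\le m-1\}$ and $\mathrm{suf}(\mathbf{s})=\{(s_{m-k+1},\dots,s_m):1\le k\le m-1\}$ are the sets of nontrivial prefixes and suffixes. A code $S\subseteq\bigcup_{i=2}^n\mathbb{Z}_q^i$ is non-overlapping if (1) for all $\mathbf{u},\mathbf{v}\in S$ (possibly equal), $\mathrm{pre}(\mathbf{u})\cap\mathrm{suf}(\mathbf{v})=\emptyset$, and (2) for all distinct $\mathbf{u},\mathbf{v}\in S$ with $|\mathbf{u}|\le|\mathbf{v}|$, $\mathbf{u}$ is not a (contiguous) subword of $\mathbf{v}$. A fixed-length code of length $n$ is a subset of $\mathbb{Z}_q^n$ (for it condition (2) is automatic). *)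

theory Defs
  imports Main "HOL-Library.Sublist"
begin

definition qwords :: "nat \<Rightarrow> nat \<Rightarrow> nat list set" where
  "qwords q i = {s. length s = i \<and> (\<forall>x\<in>set s. x < q)}"

definition pre :: "'a list \<Rightarrow> 'a list set" where
  "pre s = {take k s | k. 1 \<le> k \<and> k \<le> length s - 1}"

definition suf :: "'a list \<Rightarrow> 'a list set" where
  "suf s = {drop (length s - k) s | k. 1 \<le> k \<and> k \<le> length s - 1}"

definition non_overlapping :: "'a list set \<Rightarrow> bool" where
  "non_overlapping S \<longleftrightarrow>
     (\<forall>u\<in>S. \<forall>v\<in>S. pre u \<inter> suf v = {}) \<and>
     (\<forall>u\<in>S. \<forall>v\<in>S. u \<noteq> v \<and> length u \<le> length v \<longrightarrow> \<not> sublist u v)"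

definition C :: "nat \<Rightarrow> nat \<Rightarrow> nat" where
  "C n q = Max {card S' | S'. S' \<subseteq> qwords q n \<and> non_overlapping S'}"

end

theory Submission
  imports Defs
begin

text \<open>Pad every codeword on the left with copies of its first letter up to length n. The map is
injective because a codeword is never a proper suffix of another one. A common border w of two
padded words ends in the last letter of the second codeword; if w lies inside the padding of the
first word, then its first letter is that last letter, a border of length one; otherwise w ends in
a proper prefix of the first codeword, which is either a border of the original codewords or
contains the second codeword as a subword. Each case contradicts non-overlap.\<close>

lemma mem_pre_iff: "w \<in> pre u \<longleftrightarrow> w \<noteq> [] \<and> prefix w u \<and> length w < length u"
proof
  assume "w \<in> pre u"
  then show "w \<noteq> [] \<and> prefix w u \<and> length w < length u"
    unfolding pre_def by (auto simp: take_is_prefix)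
next
  assume w: "w \<noteq> [] \<and> prefix w u \<and> length w < length u"
  then have "w = take (length w) u" by (metis append_eq_conv_conj prefix_def)
  with w show "w \<in> pre u"
    unfolding pre_def by (intro CollectI exI[of _ "length w"]) (auto simp: Suc_le_eq)
qed

lemma mem_suf_iff: "w \<in> suf u \<longleftrightarrow> w \<noteq> [] \<and> suffix w u \<and> length w < length u"
proof
  assume "w \<in> suf u"
  then show "w \<noteq> [] \<and> suffix w u \<and> length w < length u"
    unfolding suf_def by (auto simp: suffix_drop)
next
  assume w: "w \<noteq> [] \<and> suffix w u \<and> length w < length u"
  then have "w = drop (length u - length w) u" by (auto elim: suffixE)
  with w show "w \<in> suf u"
    unfolding suf_def by (intro CollectI exI[of _ "length w"]) (auto simp: Suc_le_eq)
qed

lemma sublist_same_length: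
  assumes "sublist u v" "length v \<le> length u"
  shows "u = v"
  using assms by (auto simp: sublist_def)

lemma last_suffix: "suffix w xs \<Longrightarrow> w \<noteq> [] \<Longrightarrow> last w = last xs"
  by (auto simp: suffix_def)

lemma non_overlapping_no_border:
  assumes "non_overlapping S" "u \<in> S" "v \<in> S"
    and "w \<noteq> []" "prefix w u" "suffix w v" "length w < length u" "length w < length v"
  shows False
proof -
  have "w \<in> pre u \<inter> suf v" using assms(4-) by (simp add: mem_pre_iff mem_suf_iff)
  with assms(1-3) show False unfolding non_overlapping_def by blast
qed

lemma non_overlapping_sublist_eq:
  assumes "non_overlapping S" "u \<in> S" "v \<in> S" "sublist u v"
  shows "u = v"
  using assms sublist_length_le unfolding non_overlapping_def by blast

lemma non_overlapping_equal_length: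
  assumes "\<And>u v. u \<in> T \<Longrightarrow> v \<in> T \<Longrightarrow> length u = length v"
    and "\<And>u v. u \<in> T \<Longrightarrow> v \<in> T \<Longrightarrow> pre u \<inter> suf v = {}"
  shows "non_overlapping T"
  using assms sublist_same_length unfolding non_overlapping_def by metis

definition pad_hd :: "nat \<Rightarrow> 'a list \<Rightarrow> 'a list" where
  "pad_hd n u = replicate (n - length u) (hd u) @ u"

lemma length_pad_hd: "length u \<le> n \<Longrightarrow> length (pad_hd n u) = n"
  by (simp add: pad_hd_def)

lemma set_pad_hd: "u \<noteq> [] \<Longrightarrow> set (pad_hd n u) = set u"
  by (auto simp: pad_hd_def)

lemma suffix_pad_hd: "suffix u (pad_hd n u)"
  by (simp add: pad_hd_def suffix_appendI)

lemma last_pad_hd: "u \<noteq> [] \<Longrightarrow> last (pad_hd n u) = last u"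
  by (simp add: pad_hd_def)

lemma inj_on_pad_hd:
  assumes "non_overlapping S"
  shows "inj_on (pad_hd n) S"
proof -
  have "u = v" if "u \<in> S" "v \<in> S" "pad_hd n u = pad_hd n v" "length u \<le> length v" for u v
  proof -
    have "suffix u (pad_hd n v)" using suffix_pad_hd[of u n] that(3) by simp
    then have "suffix u v" using suffix_length_suffix suffix_pad_hd that(4) by blast
    then show "u = v"
      using non_overlapping_sublist_eq[OF assms that(1,2)] suffix_imp_sublist by blast
  qed
  then show ?thesis
    by (intro inj_onI) (metis nat_le_linear)
qed

lemma prefix_pad_hd_cases:
  assumes "prefix w (pad_hd n a)" "w \<noteq> []" "length w < n"
  obtains "last w = hd a"
  | j where "suffix (take j a) w" "0 < j" "j < length a"
proof -
  have w: "w = take (length w) (replicate (n - length a) (hd a) @ a)"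
    using assms(1) unfolding pad_hd_def by (metis append_eq_conv_conj prefix_def)
  show ?thesis
  proof (cases "length w \<le> n - length a")
    case True
    then have "take (length w) (replicate (n - length a) (hd a) @ a) = replicate (length w) (hd a)"
      by simp
    with w have "w = replicate (length w) (hd a)" by simp
    with assms(2) have "last w = hd a" by (metis last_replicate length_0_conv)
    then show ?thesis by (rule that(1))
  next
    case False
    define j where "j = length w - (n - length a)"
    from False have "take (length w) (replicate (n - length a) (hd a) @ a)
        = replicate (n - length a) (hd a) @ take j a"
      unfolding j_def by simp
    with w have "w = replicate (n - length a) (hd a) @ take j a" by simp
    then have "suffix (take j a) w" by (simp add: suffix_def)
    moreover have "0 < j" "j < length a" using False assms(3) unfolding j_def by auto
    ultimately show ?thesis by (rule that(2))
  qed
qed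

lemma pre_pad_hd_inter_suf_pad_hd:
  assumes S: "non_overlapping S" "\<And>u. u \<in> S \<Longrightarrow> 2 \<le> length u \<and> length u \<le> n"
    and a: "a \<in> S" and b: "b \<in> S"
  shows "pre (pad_hd n a) \<inter> suf (pad_hd n b) = {}"
proof (rule ccontr)
  have la: "2 \<le> length a" "length (pad_hd n a) = n" using S(2)[OF a] by (auto simp: length_pad_hd)
  have lb: "2 \<le> length b" using S(2)[OF b] by simp
  assume "pre (pad_hd n a) \<inter> suf (pad_hd n b) \<noteq> {}"
  then obtain w where w: "w \<noteq> []" "prefix w (pad_hd n a)" "suffix w (pad_hd n b)" "length w < n"
    using la(2) by (auto simp: mem_pre_iff mem_suf_iff)
  from w(2,1,4) show False
  proof (cases rule: prefix_pad_hd_cases)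
    case 1
    have "b \<noteq> []" using lb by auto
    then have "hd a = last b" using 1 last_suffix[OF w(3,1)] last_pad_hd by metis
    moreover have "prefix [hd a] a" using la by (cases a) auto
    moreover have "suffix [last b] b" using \<open>b \<noteq> []\<close> by (metis append_butlast_last_id suffix_def)
    ultimately show False
      using la lb by (intro non_overlapping_no_border[OF S(1) a b, of "[hd a]"]) auto
  next
    case (2 j)
    have zw: "suffix (take j a) (pad_hd n b)" using 2(1) w(3) by (rule suffix_order.trans)
    show False
    proof (cases "j < length b")
      case True
      then have "suffix (take j a) b"
        using suffix_length_suffix[OF zw suffix_pad_hd] 2(3) by simp
      with True 2 show False
        by (intro non_overlapping_no_border[OF S(1) a b, of "take j a"]) (auto simp: take_is_prefix)
    next
      case False
      then have "suffix b (take j a)"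
        using suffix_length_suffix[OF suffix_pad_hd zw] 2(3) by simp
      then have "sublist b a"
        by (metis sublist_order.order.trans suffix_imp_sublist prefix_imp_sublist take_is_prefix)
      then have "b = a" by (rule non_overlapping_sublist_eq[OF S(1) b a])
      with False 2(3) show False by simp
    qed
  qed
qed

lemma non_overlapping_image_pad_hd:
  assumes "non_overlapping S" "\<And>u. u \<in> S \<Longrightarrow> 2 \<le> length u \<and> length u \<le> n"
  shows "non_overlapping (pad_hd n ` S)"
proof (rule non_overlapping_equal_length)
  fix u v assume "u \<in> pad_hd n ` S" "v \<in> pad_hd n ` S"
  then obtain a b where ab: "a \<in> S" "b \<in> S" "u = pad_hd n a" "v = pad_hd n b" by blast
  then show "length u = length v" using assms(2) by (simp add: length_pad_hd)
  show "pre u \<inter> suf v = {}" using ab pre_pad_hd_inter_suf_pad_hd[OF assms] by simp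
qed

lemma finite_qwords: "finite (qwords q n)"
proof (rule finite_subset)
  show "qwords q n \<subseteq> {xs. set xs \<subseteq> {..<q} \<and> length xs = n}"
    unfolding qwords_def by auto
qed (rule finite_lists_length_eq, simp)

lemma card_le_C:
  assumes "T \<subseteq> qwords q n" "non_overlapping T"
  shows "card T \<le> C n q"
  unfolding C_def
proof (rule Max_ge)
  have "{card S' | S'. S' \<subseteq> qwords q n \<and> non_overlapping S'} \<subseteq> card ` Pow (qwords q n)"
    by auto
  then show "finite {card S' | S'. S' \<subseteq> qwords q n \<and> non_overlapping S'}"
    using finite_qwords finite_subset by blast
qed (use assms in blast)

theorem mainTheorem3:
  fixes n q :: nat and S :: "nat list set"
  assumes "n \<ge> 2" and "q \<ge> 2"
    and "S \<subseteq> (\<Union>i\<in>{2..n}. qwords q i)"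
    and "non_overlapping S"
  shows "card S \<le> C n q"
proof -
  have lengths: "2 \<le> length u \<and> length u \<le> n" if "u \<in> S" for u
    using assms(3) that unfolding qwords_def by auto
  have "pad_hd n u \<in> qwords q n" if "u \<in> S" for u
  proof -
    have "u \<noteq> []" using lengths[OF that] by auto
    then show ?thesis
      using assms(3) that lengths[OF that] by (auto simp: qwords_def length_pad_hd set_pad_hd)
  qed
  then have "pad_hd n ` S \<subseteq> qwords q n" by blast
  moreover have "non_overlapping (pad_hd n ` S)"
    using assms(4) lengths by (rule non_overlapping_image_pad_hd)
  ultimately have "card (pad_hd n ` S) \<le> C n q" by (rule card_le_C)
  then show ?thesis
    using inj_on_pad_hd[OF assms(4)] by (simp add: card_image)
qed

end
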